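(* Let $X$ be a space with $|X|<\mathfrak{d}$. (a) If $X$ is absolutely strongly star-Lindelöf, then $X$ is selectively strongly star-Menger. (b) If $X$ is absolutely Star-$\sigma$-cd, then $X$ is strongly selectively $(a)$.
   Context: All spaces are regular. $St(A,\mathcal{U})=\bigcup\{U\in\mathcal{U}:U\cap A\neq\emptyset\}$. $\mathfrak{d}$ is the dominating number. $X$ is absolutely strongly star-Lindelöf if for every open cover $\mathcal{U}$ and every dense $D\subseteq X$ there is a countable $C\subseteq D$ with $St(C,\mathcal{U})=X$. $X$ is selectively strongly star-Menger if for every sequence $(\mathcal{U}_n:n\in\omega)$ of open covers and every sequence $(D_n:n\in\omega)$ of dense subsets there are finite $F_n\subseteq D_n$ with $\{St(F_n,\mathcal{U}_n):n\in\omega\}$ covering $X$. $X$ is absolutely Star-$\sigma$-cd if for every dense $D\subseteq X$ and every open cover $\mathcal{U}$ there is $K\subseteq D$ which is a countable union of closed discrete subsets of $X$ with $St(K,\mathcal{U})=X$. $X$ is strongly selectively $(a)$ if for every sequence $(\mathcal{U}_n)$ of open covers and every sequence $(D_n)$ of dense subsets there are sets $C_n\subseteq D_n$, each closed and discrete in $X$, with $\{St(C_n,\mathcal{U}_n):n\in\omega\}$ covering $X$. *)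

theory Defs
  imports "HOL-Analysis.Analysis"
begin

definition St :: "'a set \<Rightarrow> 'a set set \<Rightarrow> 'a set" where
  "St A \<U> = \<Union>{U \<in> \<U>. U \<inter> A \<noteq> {}}"

definition open_cover :: "'a topology \<Rightarrow> 'a set set \<Rightarrow> bool" where
  "open_cover X \<U> \<longleftrightarrow> (\<forall>U\<in>\<U>. openin X U) \<and> \<Union>\<U> = topspace X"

definition dense_in :: "'a topology \<Rightarrow> 'a set \<Rightarrow> bool" where
  "dense_in X D \<longleftrightarrow> D \<subseteq> topspace X \<and> X closure_of D = topspace X"

definition closed_discrete :: "'a topology \<Rightarrow> 'a set \<Rightarrow> bool" where
  "closed_discrete X C \<longleftrightarrow> closedin X C \<and> subtopology X C = discrete_topology C"

definition regular_T1 :: "'a topology \<Rightarrow> bool" where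
  "regular_T1 X \<longleftrightarrow> regular_space X \<and> t1_space X"

definition dominating :: "(nat \<Rightarrow> nat) set \<Rightarrow> bool" where
  "dominating F \<longleftrightarrow> (\<forall>g. \<exists>f\<in>F. \<forall>\<^sub>F n in sequentially. g n \<le> f n)"

text \<open>\<open>|S| < \<dd>\<close>: the cardinality of S is strictly below the cardinality of every
  dominating family (i.e. below their minimum, the dominating number).\<close>
definition card_less_d :: "'a set \<Rightarrow> bool" where
  "card_less_d S \<longleftrightarrow> (\<forall>F. dominating F \<longrightarrow> (card_of S, card_of F) \<in> ordLess)"

definition absolutely_strongly_star_Lindelof :: "'a topology \<Rightarrow> bool" where
  "absolutely_strongly_star_Lindelof X \<longleftrightarrow>
     (\<forall>\<U> D. open_cover X \<U> \<longrightarrow> dense_in X D \<longrightarrow>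
        (\<exists>C. C \<subseteq> D \<and> countable C \<and> St C \<U> = topspace X))"

definition selectively_strongly_star_Menger :: "'a topology \<Rightarrow> bool" where
  "selectively_strongly_star_Menger X \<longleftrightarrow>
     (\<forall>\<U> D. (\<forall>n::nat. open_cover X (\<U> n)) \<longrightarrow> (\<forall>n. dense_in X (D n)) \<longrightarrow>
        (\<exists>F. (\<forall>n. finite (F n) \<and> F n \<subseteq> D n) \<and> (\<Union>n. St (F n) (\<U> n)) = topspace X))"

definition absolutely_star_sigma_cd :: "'a topology \<Rightarrow> bool" where
  "absolutely_star_sigma_cd X \<longleftrightarrow>
     (\<forall>\<U> D. open_cover X \<U> \<longrightarrow> dense_in X D \<longrightarrow>
        (\<exists>K. K \<subseteq> D \<and> (\<exists>C::nat \<Rightarrow> 'a set. (\<forall>n. closed_discrete X (C n)) \<and> K = (\<Union>n. C n))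
             \<and> St K \<U> = topspace X))"

definition strongly_selectively_a :: "'a topology \<Rightarrow> bool" where
  "strongly_selectively_a X \<longleftrightarrow>
     (\<forall>\<U> D. (\<forall>n::nat. open_cover X (\<U> n)) \<longrightarrow> (\<forall>n. dense_in X (D n)) \<longrightarrow>
        (\<exists>C. (\<forall>n. C n \<subseteq> D n \<and> closed_discrete X (C n)) \<and> (\<Union>n. St (C n) (\<U> n)) = topspace X))"

end

theory Submission
  imports Defs
begin

text \<open>Each hypothesis writes, for every n, a set whose star with respect to the n-th cover
  is X as a countable union of pieces inside D n (singletons of a countable set, resp. the
  closed discrete summands). For a point x let f x n be the least k such that the first k
  pieces at level n already star x. Fewer than \<open>\<dd>\<close> functions f x do not form a dominating
  family, so one g escapes each of them at some n; taking the first g n pieces at level n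
  then covers X, and finite unions of pieces are again finite, resp. closed discrete.\<close>

lemma St_UN: "St (\<Union>i\<in>I. A i) \<U> = (\<Union>i\<in>I. St (A i) \<U>)"
  unfolding St_def by blast

lemma St_subset_topspace: "open_cover X \<U> \<Longrightarrow> St A \<U> \<subseteq> topspace X"
  unfolding St_def open_cover_def by blast

lemma card_less_d_escape:
  fixes f :: "'a \<Rightarrow> nat \<Rightarrow> nat"
  assumes "card_less_d S"
  shows "\<exists>g. \<forall>x\<in>S. \<exists>n. f x n < g n"
proof -
  have "\<not> dominating (f ` S)"
  proof
    assume "dominating (f ` S)"
    then have less: "(card_of S, card_of (f ` S)) \<in> ordLess"
      using assms unfolding card_less_d_def by blast
    show False
      using not_ordLess_ordLeq[OF less] card_of_image[of f S] by contradiction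
  qed
  then obtain g where g: "\<And>x. x \<in> S \<Longrightarrow> \<not> (\<forall>\<^sub>F n in sequentially. g n \<le> f x n)"
    unfolding dominating_def by blast
  have "\<exists>n. f x n < g n" if "x \<in> S" for x
  proof (rule ccontr)
    assume "\<nexists>n. f x n < g n"
    then have "\<forall>\<^sub>F n in sequentially. g n \<le> f x n"
      by (simp add: not_less always_eventually)
    with g[OF that] show False ..
  qed
  then show ?thesis by blast
qed

lemma St_cover_initial_segments:
  fixes P :: "nat \<Rightarrow> nat \<Rightarrow> 'a set"
  assumes "card_less_d S"
    and "\<And>n. S \<subseteq> St (\<Union>m. P n m) (\<U> n)"
  shows "\<exists>g. S \<subseteq> (\<Union>n. St (\<Union>m\<le>g n. P n m) (\<U> n))"
proof -
  have reach: "\<exists>k. x \<in> St (P n k) (\<U> n)" if "x \<in> S" for x n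
    using that assms(2)[of n] by (auto simp: St_UN)
  define stage where "stage x n = (LEAST k. x \<in> St (P n k) (\<U> n))" for x n
  have at_stage: "x \<in> St (P n (stage x n)) (\<U> n)" if "x \<in> S" for x n
    unfolding stage_def using reach[OF that] by (rule LeastI_ex)
  obtain g where g: "\<forall>x\<in>S. \<exists>n. stage x n < g n"
    using card_less_d_escape[OF assms(1), of stage] by blast
  have "x \<in> (\<Union>n. St (\<Union>m\<le>g n. P n m) (\<U> n))" if "x \<in> S" for x
  proof -
    obtain n where "stage x n < g n"
      using g \<open>x \<in> S\<close> by blast
    then have "x \<in> St (\<Union>m\<le>g n. P n m) (\<U> n)"
      using at_stage[OF \<open>x \<in> S\<close>, of n] by (auto simp: St_UN)
    then show ?thesis by blast
  qed
  then show ?thesis by blast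
qed

lemma UN_atMost_closed_under_Un:
  fixes P :: "nat \<Rightarrow> 'a set"
  assumes "\<And>A B. Q A \<Longrightarrow> Q B \<Longrightarrow> Q (A \<union> B)"
    and "\<And>m. Q (P m)"
  shows "Q (\<Union>m\<le>k. P m)"
proof (induction k)
  case 0
  then show ?case using assms(2) by simp
next
  case (Suc k)
  then show ?case using assms by (simp add: atMost_Suc Un_commute)
qed

lemma selection_from_star_unions:
  fixes \<U> :: "nat \<Rightarrow> 'a set set"
  assumes "card_less_d (topspace X)"
    and "\<And>n. open_cover X (\<U> n)"
    and "\<And>A B. Q A \<Longrightarrow> Q B \<Longrightarrow> Q (A \<union> B)"
    and "\<And>n. \<exists>P. (\<forall>m. Q (P m) \<and> P m \<subseteq> D n) \<and> St (\<Union>m::nat. P m) (\<U> n) = topspace X"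
  shows "\<exists>F. (\<forall>n. Q (F n) \<and> F n \<subseteq> D n) \<and> (\<Union>n. St (F n) (\<U> n)) = topspace X"
proof -
  have "\<exists>P. \<forall>n. (\<forall>m. Q (P n m) \<and> P n m \<subseteq> D n) \<and> St (\<Union>m::nat. P n m) (\<U> n) = topspace X"
    using assms(4) by (intro choice allI)
  then obtain P :: "nat \<Rightarrow> nat \<Rightarrow> 'a set"
    where P: "\<And>n m. Q (P n m)" "\<And>n m. P n m \<subseteq> D n"
      and star: "\<And>n. St (\<Union>m. P n m) (\<U> n) = topspace X"
    by blast
  obtain g where g: "topspace X \<subseteq> (\<Union>n. St (\<Union>m\<le>g n. P n m) (\<U> n))"
    using St_cover_initial_segments[OF assms(1), of P \<U>] star by blast
  have "Q (\<Union>m\<le>g n. P n m)" for n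
    using UN_atMost_closed_under_Un[of Q, OF assms(3) P(1)] .
  moreover have "(\<Union>m\<le>g n. P n m) \<subseteq> D n" for n
    using P(2) by (rule UN_least)
  moreover have "(\<Union>n. St (\<Union>m\<le>g n. P n m) (\<U> n)) = topspace X"
  proof (rule subset_antisym)
    show "(\<Union>n. St (\<Union>m\<le>g n. P n m) (\<U> n)) \<subseteq> topspace X"
      using St_subset_topspace[OF assms(2)] by (rule UN_least)
  qed (rule g)
  ultimately show ?thesis
    by (intro exI[of _ "\<lambda>n. \<Union>m\<le>g n. P n m"]) simp
qed

lemma countable_as_UN_finite:
  assumes "countable C"
  shows "\<exists>P::nat \<Rightarrow> 'a set. (\<forall>m. finite (P m)) \<and> (\<Union>m. P m) = C"
proof (cases "C = {}")
  case True
  then show ?thesis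
    by (intro exI[of _ "\<lambda>m. {}"]) simp
next
  case False
  have "(\<Union>m. {from_nat_into C m}) = C"
    using range_from_nat_into[OF False assms] by blast
  then show ?thesis
    by (intro exI[of _ "\<lambda>m. {from_nat_into C m}"]) simp
qed

lemma closed_discrete_iff:
  "closed_discrete X C \<longleftrightarrow> closedin X C \<and> X derived_set_of C = {}"
  unfolding closed_discrete_def subtopology_eq_discrete_topology_eq
  by (auto simp: closedin_contains_derived_set)

lemma closed_discrete_Un:
  "closed_discrete X A \<Longrightarrow> closed_discrete X B \<Longrightarrow> closed_discrete X (A \<union> B)"
  by (simp add: closed_discrete_iff derived_set_of_Un closedin_Un)

lemma absolutely_strongly_star_Lindelof_finite_pieces:
  assumes "absolutely_strongly_star_Lindelof X" "open_cover X \<U>" "dense_in X D"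
  shows "\<exists>P. (\<forall>m. finite (P m) \<and> P m \<subseteq> D) \<and> St (\<Union>m::nat. P m) \<U> = topspace X"
proof -
  obtain C where C: "C \<subseteq> D" "countable C" "St C \<U> = topspace X"
    using assms unfolding absolutely_strongly_star_Lindelof_def by blast
  obtain P :: "nat \<Rightarrow> 'a set" where "\<forall>m. finite (P m)" "(\<Union>m. P m) = C"
    using countable_as_UN_finite[OF C(2)] by blast
  with C show ?thesis
    by (intro exI[of _ P]) auto
qed

lemma absolutely_star_sigma_cd_closed_discrete_pieces:
  assumes "absolutely_star_sigma_cd X" "open_cover X \<U>" "dense_in X D"
  shows "\<exists>P. (\<forall>m. closed_discrete X (P m) \<and> P m \<subseteq> D) \<and> St (\<Union>m::nat. P m) \<U> = topspace X"
proof -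
  obtain K P where "K \<subseteq> D" "St K \<U> = topspace X"
    and "\<forall>m::nat. closed_discrete X (P m)" "K = (\<Union>m. P m)"
    using assms(1)[unfolded absolutely_star_sigma_cd_def, rule_format, OF assms(2,3)]
    by (elim exE conjE) blast
  then show ?thesis
    by (intro exI[of _ P]) auto
qed

theorem mainTheorem4:
  fixes X :: "'a topology"
  assumes "regular_T1 X"
    and "card_less_d (topspace X)"
  shows "(absolutely_strongly_star_Lindelof X \<longrightarrow> selectively_strongly_star_Menger X)
       \<and> (absolutely_star_sigma_cd X \<longrightarrow> strongly_selectively_a X)"
proof (intro conjI impI)
  assume ssL: "absolutely_strongly_star_Lindelof X"
  show "selectively_strongly_star_Menger X"
    unfolding selectively_strongly_star_Menger_def
  proof (intro allI impI)
    fix \<U> :: "nat \<Rightarrow> 'a set set" and D :: "nat \<Rightarrow> 'a set"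
    assume cover: "\<forall>n. open_cover X (\<U> n)" and dense: "\<forall>n. dense_in X (D n)"
    show "\<exists>F. (\<forall>n. finite (F n) \<and> F n \<subseteq> D n) \<and> (\<Union>n. St (F n) (\<U> n)) = topspace X"
      by (rule selection_from_star_unions[where Q = finite, OF assms(2) cover[rule_format] finite_UnI
            absolutely_strongly_star_Lindelof_finite_pieces[OF ssL cover[rule_format] dense[rule_format]]])
  qed
next
  assume sigma_cd: "absolutely_star_sigma_cd X"
  show "strongly_selectively_a X"
    unfolding strongly_selectively_a_def
  proof (intro allI impI)
    fix \<U> :: "nat \<Rightarrow> 'a set set" and D :: "nat \<Rightarrow> 'a set"
    assume cover: "\<forall>n. open_cover X (\<U> n)" and dense: "\<forall>n. dense_in X (D n)"
    have "\<exists>F. (\<forall>n. closed_discrete X (F n) \<and> F n \<subseteq> D n) \<and> (\<Union>n. St (F n) (\<U> n)) = topspace X"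
      by (rule selection_from_star_unions[where Q = "closed_discrete X",
            OF assms(2) cover[rule_format] closed_discrete_Un
            absolutely_star_sigma_cd_closed_discrete_pieces[OF sigma_cd cover[rule_format] dense[rule_format]]])
    then show "\<exists>C. (\<forall>n. C n \<subseteq> D n \<and> closed_discrete X (C n)) \<and> (\<Union>n. St (C n) (\<U> n)) = topspace X"
      by (simp add: conj_commute)
  qed
qed

end
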